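(* Let $m>n$ be positive integers. (a) For every $\lambda\in X$, $x(\lambda)$ lies in the $\mathfrak T_{iso}$-orbit $\mathcal O$ of $\Lambda_0$. (b) For every $k\in\mathbb Z$, $\Lambda_0+kn\,\mathbf m\in\mathcal O$, where $\mathbf m=(m,\dots,m|m,\dots,m)$.
   Context: $X$ is the set of partitions $\lambda=(\lambda_1\ge\dots\ge\lambda_n\ge0)$ with $\lambda_1\le m$; $\lambda'_j=\#\{i:\lambda_i\ge j\}$. For $\lambda\in X$, $x(\lambda)=(a_1,\dots,a_n|b_1,\dots,b_m)\in\mathbb Z^{n|m}$ with $a_i=m(n-i)+n\lambda_{n+1-i}$, $b_j=n(j-1)+m\lambda'_j$; $\Lambda_0=x(\emptyset)=(m(n-1),\dots,m,0|0,n,\dots,n(m-1))$. For $\alpha=\epsilon_i-\delta_j$: $\Pi_\alpha=\{a_i=b_j\}$, $\Pi_{-\alpha}=\{a_i-b_j=n-m\}$, $\tau_\alpha:\Pi_\alpha\to\Pi_{-\alpha}$ adds $n$ to $a_i$ and $m$ to $b_j$, $\tau_{-\alpha}=\tau_\alpha^{-1}$. $\mathcal O$ is the set of elements obtained from $\Lambda_0$ by finite sequences of maps $\tau_{\pm\alpha}$, each applied on its domain. *)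

theory Defs
  imports Main
begin

text \<open>An element of Z^{n|m} is a pair (a, b) of integer sequences; only the
coordinates a 1..a n and b 1..b m are meaningful. All vectors considered here
have coordinates 0 outside these index ranges, and the maps tau only change
coordinates inside the ranges.\<close>

type_synonym supvec = "(nat \<Rightarrow> int) \<times> (nat \<Rightarrow> int)"

definition isX :: "nat \<Rightarrow> nat \<Rightarrow> (nat \<Rightarrow> nat) \<Rightarrow> bool" where
  "isX n m lam \<longleftrightarrow> (\<forall>i j. 1 \<le> i \<and> i \<le> j \<and> j \<le> n \<longrightarrow> lam j \<le> lam i)
                   \<and> (\<forall>i. 1 \<le> i \<and> i \<le> n \<longrightarrow> lam i \<le> m)"

definition conjp :: "nat \<Rightarrow> (nat \<Rightarrow> nat) \<Rightarrow> nat \<Rightarrow> nat" where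
  "conjp n lam j = card {i \<in> {1..n}. j \<le> lam i}"

definition xlam :: "nat \<Rightarrow> nat \<Rightarrow> (nat \<Rightarrow> nat) \<Rightarrow> supvec" where
  "xlam n m lam =
    ((\<lambda>i. if 1 \<le> i \<and> i \<le> n
          then int m * (int n - int i) + int n * int (lam (n + 1 - i)) else 0),
     (\<lambda>j. if 1 \<le> j \<and> j \<le> m
          then int n * (int j - 1) + int m * int (conjp n lam j) else 0))"

definition Lambda0 :: "nat \<Rightarrow> nat \<Rightarrow> supvec" where
  "Lambda0 n m =
    ((\<lambda>i. if 1 \<le> i \<and> i \<le> n then int m * (int n - int i) else 0),
     (\<lambda>j. if 1 \<le> j \<and> j \<le> m then int n * (int j - 1) else 0))"

text \<open>tau_alpha for alpha = eps_i - delta_j: adds n to a_i and m to b_j;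
its inverse tau_{-alpha} subtracts them.\<close>
definition tau_plus :: "nat \<Rightarrow> nat \<Rightarrow> nat \<Rightarrow> nat \<Rightarrow> supvec \<Rightarrow> supvec" where
  "tau_plus n m i j x = ((fst x)(i := fst x i + int n), (snd x)(j := snd x j + int m))"

definition tau_minus :: "nat \<Rightarrow> nat \<Rightarrow> nat \<Rightarrow> nat \<Rightarrow> supvec \<Rightarrow> supvec" where
  "tau_minus n m i j x = ((fst x)(i := fst x i - int n), (snd x)(j := snd x j - int m))"

inductive_set orbit :: "nat \<Rightarrow> nat \<Rightarrow> supvec set" for n m where
  base: "Lambda0 n m \<in> orbit n m"
| plus: "\<lbrakk>x \<in> orbit n m; 1 \<le> i; i \<le> n; 1 \<le> j; j \<le> m; fst x i = snd x j\<rbrakk>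
          \<Longrightarrow> tau_plus n m i j x \<in> orbit n m"
| minus: "\<lbrakk>x \<in> orbit n m; 1 \<le> i; i \<le> n; 1 \<le> j; j \<le> m;
           fst x i - snd x j = int n - int m\<rbrakk>
          \<Longrightarrow> tau_minus n m i j x \<in> orbit n m"

definition shiftL :: "nat \<Rightarrow> nat \<Rightarrow> int \<Rightarrow> supvec" where
  "shiftL n m k =
    ((\<lambda>i. if 1 \<le> i \<and> i \<le> n then fst (Lambda0 n m) i + k * int n * int m else 0),
     (\<lambda>j. if 1 \<le> j \<and> j \<le> m then snd (Lambda0 n m) j + k * int n * int m else 0))"

end

(* Adding a box in row r and column c to the Young diagram of lam changes x(lam) by
   tau_alpha with alpha = eps_(n+1-r) - delta_c.  If the box is an addable corner, exactly
   r - 1 rows have length at least c, which is precisely the domain condition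
   a_(n+1-r) = b_c; growing lam corner by corner from the empty diagram gives (a).
   For (b), the full partition (m,...,m) gives Lambda0 + nm(1,...,1|1,...,1).  As tau_(-alpha)
   inverts tau_alpha, O is the equivalence class of Lambda0 under the tau_alpha-steps, and these
   steps commute with adding a constant to all coordinates; so translating by any integer
   multiple of nm stays in O.  Neither part uses 0 < n < m. *)

theory Submission
  imports Defs
begin

lemma isX_remove_corner:
  assumes "isX n m lam" and "1 \<le> r" "r \<le> n"
    and corner: "\<forall>i. r < i \<and> i \<le> n \<longrightarrow> lam i < lam r"
  shows "isX n m (lam(r := lam r - 1))"
  unfolding isX_def
proof (intro conjI allI impI)
  fix i j assume ij: "1 \<le> i \<and> i \<le> j \<and> j \<le> n"
  then have "lam j \<le> lam i" using assms(1) unfolding isX_def by blast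
  moreover have "lam j < lam r" if "i = r" "j \<noteq> r" using that ij corner by simp
  ultimately show "(lam(r := lam r - 1)) j \<le> (lam(r := lam r - 1)) i" by auto
next
  fix i assume "1 \<le> i \<and> i \<le> n"
  then show "(lam(r := lam r - 1)) i \<le> m" using assms(1) unfolding isX_def by auto
qed

lemma conjp_remove_box:
  assumes "1 \<le> r" "r \<le> n" "0 < lam r"
  shows "conjp n lam j = conjp n (lam(r := lam r - 1)) j + (if j = lam r then 1 else 0)"
proof -
  let ?mu = "lam(r := lam r - 1)"
  have "{i \<in> {1..n}. j \<le> lam i} =
        {i \<in> {1..n}. j \<le> ?mu i} \<union> (if j = lam r then {r} else {})"
    using assms by auto
  moreover have "j = lam r \<Longrightarrow> r \<notin> {i \<in> {1..n}. j \<le> ?mu i}"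
    using assms by auto
  ultimately show ?thesis unfolding conjp_def by auto
qed

lemma conjp_remove_corner:
  assumes "isX n m lam" and "1 \<le> r" "r \<le> n" "0 < lam r"
    and corner: "\<forall>i. r < i \<and> i \<le> n \<longrightarrow> lam i < lam r"
  shows "conjp n (lam(r := lam r - 1)) (lam r) = r - 1"
proof -
  have "i < r" if "1 \<le> i" "i \<le> n" "lam r \<le> (lam(r := lam r - 1)) i" for i
  proof (rule ccontr)
    assume "\<not> i < r"
    then have "r < i \<or> i = r" by auto
    then show False using that assms(4) corner by auto
  qed
  moreover have "lam r \<le> lam i" if "1 \<le> i" "i < r" for i
    using that assms(1,3) unfolding isX_def by auto
  ultimately have "{i \<in> {1..n}. lam r \<le> (lam(r := lam r - 1)) i} = {1..r - 1}"
    using assms(3) by fastforce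
  then show ?thesis by (simp add: conjp_def)
qed

lemma xlam_remove_box:
  assumes "1 \<le> r" "r \<le> n" "0 < lam r" "lam r \<le> m"
  shows "xlam n m lam = tau_plus n m (n + 1 - r) (lam r) (xlam n m (lam(r := lam r - 1)))"
proof -
  let ?mu = "lam(r := lam r - 1)"
  have "fst (xlam n m lam) i = fst (tau_plus n m (n + 1 - r) (lam r) (xlam n m ?mu)) i" for i
  proof (cases "i = n + 1 - r")
    case True
    moreover have "1 \<le> i" "i \<le> n" "n + 1 - i = r" using True assms by auto
    ultimately show ?thesis using assms
      by (simp add: xlam_def tau_plus_def of_nat_diff algebra_simps)
  next
    case False
    then have "n + 1 - i \<noteq> r \<or> \<not> (1 \<le> i \<and> i \<le> n)" using assms by auto
    then show ?thesis using False by (auto simp: xlam_def tau_plus_def)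
  qed
  moreover have
    "snd (xlam n m lam) j = snd (tau_plus n m (n + 1 - r) (lam r) (xlam n m ?mu)) j" for j
    using assms
    by (auto simp: xlam_def tau_plus_def conjp_remove_box[of r n lam, OF assms(1-3)] algebra_simps)
  ultimately show ?thesis by (simp add: prod_eq_iff fun_eq_iff)
qed

lemma xlam_remove_corner_domain:
  assumes "isX n m lam" and "1 \<le> r" "r \<le> n" "0 < lam r"
    and corner: "\<forall>i. r < i \<and> i \<le> n \<longrightarrow> lam i < lam r"
  shows "fst (xlam n m (lam(r := lam r - 1))) (n + 1 - r)
       = snd (xlam n m (lam(r := lam r - 1))) (lam r)"
proof -
  have "lam r \<le> m" using assms(1-3) unfolding isX_def by blast
  moreover have "1 \<le> n + 1 - r" "n + 1 - r \<le> n" "n + 1 - (n + 1 - r) = r" using assms by auto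
  ultimately show ?thesis
    using assms(2-4) conjp_remove_corner[OF assms]
    by (simp add: xlam_def of_nat_diff algebra_simps)
qed

lemma xlam_zero:
  assumes "\<forall>i\<in>{1..n}. lam i = 0"
  shows "xlam n m lam = Lambda0 n m"
proof -
  have "conjp n lam j = 0" if "1 \<le> j" for j
    using assms that by (auto simp: conjp_def)
  moreover have "lam (n + 1 - i) = 0" if "1 \<le> i" "i \<le> n" for i
  proof -
    have "n + 1 - i \<in> {1..n}" using that by auto
    then show ?thesis using assms by blast
  qed
  ultimately show ?thesis by (simp add: xlam_def Lambda0_def prod_eq_iff fun_eq_iff)
qed

lemma xlam_in_orbit:
  assumes "isX n m lam"
  shows "xlam n m lam \<in> orbit n m"
  using assms
proof (induction "\<Sum>i=1..n. lam i" arbitrary: lam rule: less_induct)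
  case less
  show ?case
  proof (cases "\<forall>i\<in>{1..n}. lam i = 0")
    case True
    then show ?thesis by (simp add: xlam_zero orbit.base)
  next
    case False
    define S where "S = {i \<in> {1..n}. 0 < lam i}"
    define r where "r = Max S"
    have "finite S" "S \<noteq> {}" using False by (auto simp: S_def)
    then have "r \<in> S" and r_max: "\<And>i. i \<in> S \<Longrightarrow> i \<le> r"
      unfolding r_def by auto
    then have r: "1 \<le> r" "r \<le> n" "0 < lam r" by (auto simp: S_def)
    have corner: "\<forall>i. r < i \<and> i \<le> n \<longrightarrow> lam i < lam r"
      using r r_max by (fastforce simp: S_def)
    let ?mu = "lam(r := lam r - 1)"
    have "(\<Sum>i=1..n. ?mu i) < (\<Sum>i=1..n. lam i)"
      using r by (intro sum_strict_mono_ex1) auto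
    then have "xlam n m ?mu \<in> orbit n m"
      using less.hyps isX_remove_corner[OF less.prems r(1,2) corner] by blast
    moreover have "lam r \<le> m" using less.prems r unfolding isX_def by blast
    ultimately show ?thesis
      using r less.prems corner xlam_remove_box[of r n lam m]
        xlam_remove_corner_domain[of n m lam r]
      by (auto intro!: orbit.plus)
  qed
qed

definition tau_step :: "nat \<Rightarrow> nat \<Rightarrow> supvec \<Rightarrow> supvec \<Rightarrow> bool" where
  "tau_step n m x y \<longleftrightarrow>
     (\<exists>i\<in>{1..n}. \<exists>j\<in>{1..m}. fst x i = snd x j \<and> y = tau_plus n m i j x)"

lemma tau_stepI:
  "\<lbrakk>1 \<le> i; i \<le> n; 1 \<le> j; j \<le> m; fst x i = snd x j\<rbrakk>
    \<Longrightarrow> tau_step n m x (tau_plus n m i j x)"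
  unfolding tau_step_def by (intro bexI[of _ i] bexI[of _ j]) auto

lemma tau_step_iff_tau_minus:
  "tau_step n m y x \<longleftrightarrow>
     (\<exists>i\<in>{1..n}. \<exists>j\<in>{1..m}. fst x i - snd x j = int n - int m \<and> y = tau_minus n m i j x)"
proof -
  have "(fst y i = snd y j \<and> x = tau_plus n m i j y) \<longleftrightarrow>
        (fst x i - snd x j = int n - int m \<and> y = tau_minus n m i j x)" for i j
    by (auto simp: tau_plus_def tau_minus_def prod_eq_iff fun_eq_iff)
  then show ?thesis unfolding tau_step_def by blast
qed

lemma orbit_iff_equivclp: "x \<in> orbit n m \<longleftrightarrow> equivclp (tau_step n m) (Lambda0 n m) x"
proof
  show "x \<in> orbit n m \<Longrightarrow> equivclp (tau_step n m) (Lambda0 n m) x"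
  proof (induction rule: orbit.induct)
    case (plus x i j)
    then show ?case by (blast intro: equivclp_into_equivclp tau_stepI)
  next
    case (minus x i j)
    then have "tau_step n m (tau_minus n m i j x) x"
      unfolding tau_step_iff_tau_minus by (intro bexI[of _ i] bexI[of _ j]) auto
    then show ?case by (blast intro: equivclp_into_equivclp minus.IH)
  qed simp
next
  show "equivclp (tau_step n m) (Lambda0 n m) x \<Longrightarrow> x \<in> orbit n m"
  proof (induction rule: equivclp_induct)
    case (step y z)
    from step.hyps(2) show ?case
    proof
      assume "tau_step n m y z"
      then show ?thesis using step.IH by (auto simp: tau_step_def intro: orbit.plus)
    next
      assume "tau_step n m z y"
      then show ?thesis using step.IH by (auto simp: tau_step_iff_tau_minus intro: orbit.minus)
    qed
  qed (rule orbit.base)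
qed

definition shift_diag :: "nat \<Rightarrow> nat \<Rightarrow> int \<Rightarrow> supvec \<Rightarrow> supvec" where
  "shift_diag n m c x =
    ((\<lambda>i. if 1 \<le> i \<and> i \<le> n then fst x i + c else fst x i),
     (\<lambda>j. if 1 \<le> j \<and> j \<le> m then snd x j + c else snd x j))"

lemma shift_diag_0 [simp]: "shift_diag n m 0 x = x"
  by (simp add: shift_diag_def prod_eq_iff fun_eq_iff)

lemma shift_diag_shift_diag [simp]:
  "shift_diag n m c (shift_diag n m d x) = shift_diag n m (c + d) x"
  by (auto simp: shift_diag_def)

lemma tau_step_shift_diag:
  "tau_step n m x y \<Longrightarrow> tau_step n m (shift_diag n m c x) (shift_diag n m c y)"
  unfolding tau_step_def by (fastforce simp: shift_diag_def tau_plus_def)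

lemma equivclp_tau_step_shift_diag:
  assumes "equivclp (tau_step n m) x y"
  shows "equivclp (tau_step n m) (shift_diag n m c x) (shift_diag n m c y)"
  using assms
proof (induction rule: equivclp_induct)
  case (step y z)
  then show ?case by (blast intro: equivclp_into_equivclp tau_step_shift_diag)
qed simp

lemma shift_diag_multiple_in_orbit:
  fixes k :: int
  assumes "shift_diag n m d (Lambda0 n m) \<in> orbit n m"
  shows "shift_diag n m (k * d) (Lambda0 n m) \<in> orbit n m"
proof -
  let ?R = "equivclp (tau_step n m)" and ?L = "Lambda0 n m"
  have translate: "?R (shift_diag n m c ?L) (shift_diag n m (c + d) ?L)" for c
    using equivclp_tau_step_shift_diag[of n m ?L "shift_diag n m d ?L" c] assms
    by (simp add: orbit_iff_equivclp)
  have "?R ?L (shift_diag n m (k * d) ?L)"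
  proof (induction k rule: int_induct[where k = 0])
    case (step1 i)
    then show ?case using translate[of "i * d"] by (auto simp: distrib_right intro: equivclp_trans)
  next
    case (step2 i)
    then show ?case using translate[of "(i - 1) * d"]
      by (auto simp: algebra_simps intro: equivclp_trans equivclp_sym)
  qed simp
  then show ?thesis by (simp add: orbit_iff_equivclp)
qed

lemma xlam_full: "xlam n m (\<lambda>_. m) = shift_diag n m (int n * int m) (Lambda0 n m)"
proof -
  have "conjp n (\<lambda>_. m) j = n" if "j \<le> m" for j
  proof -
    have "{i \<in> {1..n}. j \<le> m} = {1..n}" using that by auto
    then show ?thesis by (simp add: conjp_def)
  qed
  then show ?thesis
    by (simp add: xlam_def shift_diag_def Lambda0_def prod_eq_iff fun_eq_iff algebra_simps)
qed

lemma shiftL_eq_shift_diag: "shiftL n m k = shift_diag n m (k * (int n * int m)) (Lambda0 n m)"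
  by (simp add: shiftL_def shift_diag_def Lambda0_def prod_eq_iff fun_eq_iff algebra_simps)

theorem corollary4p4:
  fixes n m :: nat
  assumes "0 < n" and "n < m"
  shows "(\<forall>lam. isX n m lam \<longrightarrow> xlam n m lam \<in> orbit n m)
         \<and> (\<forall>k::int. shiftL n m k \<in> orbit n m)"
proof
  show "\<forall>lam. isX n m lam \<longrightarrow> xlam n m lam \<in> orbit n m"
    by (blast intro: xlam_in_orbit)
  have "isX n m (\<lambda>_. m)" by (simp add: isX_def)
  then have "shift_diag n m (int n * int m) (Lambda0 n m) \<in> orbit n m"
    using xlam_in_orbit xlam_full by metis
  then show "\<forall>k::int. shiftL n m k \<in> orbit n m"
    by (simp add: shiftL_eq_shift_diag shift_diag_multiple_in_orbit)
qed

end
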